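(* Let $n\in\mathbb{N}$, $\beta\in\mathbb{R}$, $\epsilon\in\mathbb{R}^n$, $X\in\mathbb{R}^n$, $G_n\subseteq\{1,\dots,n\}$ and $o\in\mathbb{R}^n$ with $o_i=0$ for $i\notin G_n$; set $Y:=X\beta+\epsilon+o$. Let $\mathcal{U}_n\subseteq\mathcal{P}(\{1,\dots,n\})$ with $\emptyset\notin\mathcal{U}_n$ and $\mathrm{Inl}(\mathcal{U}_n):=\{S\in\mathcal{U}_n:S\cap G_n=\emptyset\}\ne\emptyset$. For $S\in\mathcal{U}_n$ and $U_n\in\mathrm{Inl}(\mathcal{U}_n)$ define $\eta_1(S):=\frac{|X_S^\top\epsilon_S|}{\|X_S\|_2^2}$ and $\eta_2(S,U_n)$ through \[ \eta_2^2(S,U_n):=\frac{1}{\|X_{S\setminus G_n}\|_2^2}\Big(\frac{|S|}{|U_n|}\|\epsilon_{U_n}\|_2^2-\|\epsilon_S\|_2^2-2\epsilon_S^\top o_S+\frac{(X_S^\top\epsilon_S)^2}{\|X_S\|_2^2}+2\frac{|X_S^\top\epsilon_S|\,|X_S^\top o_S|}{\|X_S\|_2^2}-\frac{|S|(X_{U_n}^\top\epsilon_{U_n})^2}{|U_n|\|X_{U_n}\|_2^2}\Big). \] Then \[ |\hat\beta^n_{\mathrm{BFS}}(\mathcal{U}_n)-\beta|\le\max_{S\in\mathcal{U}_n}\min_{U_n\in\mathrm{Inl}(\mathcal{U}_n)}\big(\eta_1(S)+\eta_2(S,U_n)\big). \]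
   Context: $X_S,Y_S,\epsilon_S,o_S$ denote subvectors with indices in $S$. $\hat\beta^S_{\mathrm{OLS}}(X,Y):=(X_S^\top X_S)^{+}X_S^\top Y_S$ ($^{+}$: Moore–Penrose inverse). BFS with collection $\mathcal{U}_n$: enumerate $S\in\mathcal{U}_n$ in a fixed order, compute $\mathrm{err}(S)=\frac1{|S|}\|Y_S-X_S\hat\beta^S_{\mathrm{OLS}}(X,Y)\|_2^2$, and output $\hat\beta^n_{\mathrm{BFS}}(\mathcal{U}_n):=\hat\beta^{S^*}_{\mathrm{OLS}}(X,Y)$ for the first minimizer $S^*$. Convention: a bound containing a summand with zero denominator is infinite. *)

theory Defs
  imports "HOL-Analysis.Analysis"
begin

text \<open>Vectors in R^n are functions nat => real, only indices in {1..n} matter.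
  All quantities are for a single scalar covariate X and scalar beta.\<close>

definition sqn :: "(nat \<Rightarrow> real) \<Rightarrow> nat set \<Rightarrow> real" where
  "sqn X S = (\<Sum>i\<in>S. (X i)^2)"

definition ipr :: "(nat \<Rightarrow> real) \<Rightarrow> (nat \<Rightarrow> real) \<Rightarrow> nat set \<Rightarrow> real" where
  "ipr X Z S = (\<Sum>i\<in>S. X i * Z i)"

text \<open>OLS on S: (X_S^T X_S)^+ X_S^T Y_S; for a 1x1 matrix the Moore-Penrose inverse
  is inverse (with inverse 0 = 0).\<close>
definition ols :: "(nat \<Rightarrow> real) \<Rightarrow> (nat \<Rightarrow> real) \<Rightarrow> nat set \<Rightarrow> real" where
  "ols X Y S = inverse (sqn X S) * ipr X Y S"

definition err :: "(nat \<Rightarrow> real) \<Rightarrow> (nat \<Rightarrow> real) \<Rightarrow> nat set \<Rightarrow> real" where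
  "err X Y S = (1 / real (card S)) * (\<Sum>i\<in>S. (Y i - X i * ols X Y S)^2)"

text \<open>BFS: the collection is enumerated by the list us (fixed order); the output is
  the OLS estimate on the first minimiser of err.\<close>
definition bfs :: "(nat \<Rightarrow> real) \<Rightarrow> (nat \<Rightarrow> real) \<Rightarrow> nat set list \<Rightarrow> real" where
  "bfs X Y us = ols X Y (hd (filter (\<lambda>S. \<forall>T\<in>set us. err X Y S \<le> err X Y T) us))"

definition Inl :: "nat set set \<Rightarrow> nat set \<Rightarrow> nat set set" where
  "Inl U G = {S \<in> U. S \<inter> G = {}}"

definition eta1 :: "(nat \<Rightarrow> real) \<Rightarrow> (nat \<Rightarrow> real) \<Rightarrow> nat set \<Rightarrow> ereal" where
  "eta1 X e S = (if sqn X S = 0 then \<infinity> else ereal (\<bar>ipr X e S\<bar> / sqn X S))"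

definition eta2 :: "(nat \<Rightarrow> real) \<Rightarrow> (nat \<Rightarrow> real) \<Rightarrow> (nat \<Rightarrow> real) \<Rightarrow> nat set
    \<Rightarrow> nat set \<Rightarrow> nat set \<Rightarrow> ereal" where
  "eta2 X e ov G S U =
    (if sqn X (S - G) = 0 \<or> sqn X S = 0 \<or> sqn X U = 0 \<or> card U = 0 then \<infinity>
     else ereal (sqrt ((1 / sqn X (S - G)) *
        (real (card S) / real (card U) * sqn e U - sqn e S - 2 * ipr e ov S
         + (ipr X e S)^2 / sqn X S
         + 2 * (\<bar>ipr X e S\<bar> * \<bar>ipr X ov S\<bar>) / sqn X S
         - real (card S) * (ipr X e U)^2 / (real (card U) * sqn X U)))))"

end

theory Submission
  imports Defs
begin

text \<open>On the selected set S the OLS error is (X_S' eps_S + X_S' o_S) / |X_S|^2, and the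
  first summand is eta1(S). For the outlier summand, BFS gives err(S) <= err(U) for every
  outlier-free U; expanding both residual sums turns this into the lower bound
  |o_S|^2 - (X_S' o_S)^2 / |X_S|^2 for the bracket of eta2(S,U)^2. Since o lives on S \<inter> G,
  Cauchy-Schwarz on S \<inter> G bounds that quantity below by
  |X_(S-G)|^2 (X_S' o_S)^2 / |X_S|^4, i.e. |X_(S-G)|^2 times the square of the outlier summand.\<close>

lemma sqn_nonneg: "0 \<le> sqn X S"
  unfolding sqn_def by (simp add: sum_nonneg)

lemma finite_nonempty_if_sqn_nonzero:
  assumes "sqn X S \<noteq> 0"
  shows "finite S" "S \<noteq> {}"
  using assms unfolding sqn_def by (auto intro: ccontr)

lemma sqn_add:
  "sqn (\<lambda>i. V i + W i) S = sqn V S + 2 * ipr V W S + sqn W S"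
  unfolding sqn_def ipr_def
  by (simp add: power2_sum sum.distrib sum_distrib_left mult.assoc)

lemma ipr_add: "ipr X (\<lambda>i. V i + W i) S = ipr X V S + ipr X W S"
  unfolding ipr_def by (simp add: distrib_left sum.distrib)

lemma ipr_affine: "ipr X (\<lambda>i. X i * b + W i) S = b * sqn X S + ipr X W S"
  unfolding ipr_def sqn_def
  by (simp add: algebra_simps sum.distrib sum_distrib_left power2_eq_square)

lemma ols_affine:
  assumes "sqn X S \<noteq> 0"
  shows "ols X (\<lambda>i. X i * b + W i) S = b + ols X W S"
  using assms unfolding ols_def ipr_affine by (simp add: field_simps)

lemma err_affine:
  assumes "sqn X S \<noteq> 0"
  shows "err X (\<lambda>i. X i * b + W i) S = err X W S"
  unfolding err_def ols_affine[OF assms] by (simp add: algebra_simps)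

lemma rss_ols:
  assumes "sqn X S \<noteq> 0"
  shows "(\<Sum>i\<in>S. (W i - X i * ols X W S)^2) = sqn W S - (ipr X W S)^2 / sqn X S"
proof -
  define c where "c = ols X W S"
  have "(\<Sum>i\<in>S. (W i - X i * c)^2) = sqn W S - 2 * c * ipr X W S + c^2 * sqn X S"
    unfolding sqn_def ipr_def
    by (simp add: power2_diff power_mult_distrib sum.distrib sum_subtractf sum_distrib_left
        algebra_simps)
  also have "\<dots> = sqn W S - (ipr X W S)^2 / sqn X S"
    using assms unfolding c_def ols_def by (simp add: field_simps power2_eq_square)
  finally show ?thesis unfolding c_def .
qed

lemma err_eq:
  assumes "sqn X S \<noteq> 0"
  shows "err X W S = (sqn W S - (ipr X W S)^2 / sqn X S) / real (card S)"
  unfolding err_def rss_ols[OF assms] by simp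

text \<open>Cauchy-Schwarz on S \<inter> G, the only rows carrying outliers, gives
  (X_S' o_S)^2 <= |X_(S \<inter> G)|^2 |o_S|^2.\<close>
lemma outlier_ipr_sq_bound:
  assumes "finite S" and "\<forall>i\<in>S - G. o' i = 0"
  shows "(ipr X o' S)^2 * (sqn X S + sqn X (S - G)) \<le> sqn o' S * (sqn X S)^2"
proof -
  define qG where "qG = sqn X (S \<inter> G)"
  define qN where "qN = sqn X (S - G)"
  have split: "sqn X S = qG + qN"
    unfolding qG_def qN_def sqn_def using assms(1) by (metis sum.Int_Diff)
  have "ipr X o' S = ipr X o' (S \<inter> G)" and "sqn o' S = sqn o' (S \<inter> G)"
    unfolding ipr_def sqn_def using assms by (subst sum.Int_Diff[of S _ G]; auto)+
  then have cs: "(ipr X o' S)^2 \<le> qG * sqn o' S"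
    unfolding qG_def ipr_def sqn_def by (simp add: Cauchy_Schwarz_ineq_sum)
  have "qG * (sqn X S + qN) \<le> (sqn X S)^2"
    unfolding split using sqn_nonneg[of X "S - G"] qN_def
    by (simp add: power2_eq_square algebra_simps)
  then have "qG * sqn o' S * (sqn X S + qN) \<le> sqn o' S * (sqn X S)^2"
    using sqn_nonneg[of o' S] by (metis mult.commute mult.left_commute mult_left_mono)
  moreover have "(ipr X o' S)^2 * (sqn X S + qN) \<le> qG * sqn o' S * (sqn X S + qN)"
    using cs sqn_nonneg[of X S] sqn_nonneg[of X "S - G"] qN_def by (intro mult_right_mono) auto
  ultimately show ?thesis unfolding qN_def by linarith
qed

definition eta2_bracket ::
    "(nat \<Rightarrow> real) \<Rightarrow> (nat \<Rightarrow> real) \<Rightarrow> (nat \<Rightarrow> real) \<Rightarrow> nat set \<Rightarrow> nat set \<Rightarrow> real" where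
  "eta2_bracket X e ov S U =
     real (card S) / real (card U) * sqn e U - sqn e S - 2 * ipr e ov S
     + (ipr X e S)^2 / sqn X S
     + 2 * (\<bar>ipr X e S\<bar> * \<bar>ipr X ov S\<bar>) / sqn X S
     - real (card S) * (ipr X e U)^2 / (real (card U) * sqn X U)"

lemma err_le_imp_eta2_bracket_ge:
  fixes X e ov :: "nat \<Rightarrow> real" and b :: real
  defines "Y \<equiv> \<lambda>i. X i * b + e i + ov i"
  assumes "sqn X S \<noteq> 0" and "sqn X U \<noteq> 0" and "card U \<noteq> 0"
    and "\<forall>i\<in>U. ov i = 0"
    and "err X Y S \<le> err X Y U"
  shows "sqn ov S - (ipr X ov S)^2 / sqn X S \<le> eta2_bracket X e ov S U"
proof -
  define W where "W = (\<lambda>i. e i + ov i)"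
  define q where "q = sqn X S"
  define ae where "ae = ipr X e S"
  define ao where "ao = ipr X ov S"
  define cS where "cS = real (card S)"
  define cU where "cU = real (card U)"
  define rU where "rU = sqn e U - (ipr X e U)^2 / sqn X U"
  have Y: "Y = (\<lambda>i. X i * b + W i)"
    unfolding Y_def W_def by (simp add: add.assoc)
  have "cS > 0"
    using finite_nonempty_if_sqn_nonzero[OF assms(2)] cS_def by (simp add: card_gt_0_iff)
  have "cU > 0" using assms(4) cU_def by simp
  have q: "q > 0" using assms(2) sqn_nonneg[of X S] q_def by simp
  have "sqn W U = sqn e U" "ipr X W U = ipr X e U"
    unfolding W_def sqn_def ipr_def using assms(5) by (auto intro: sum.cong)
  then have "err X W U = rU / cU"
    unfolding err_eq[OF assms(3)] rU_def cU_def by simp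
  moreover have "err X W S = (sqn e S + 2 * ipr e ov S + sqn ov S - (ae + ao)^2 / q) / cS"
    unfolding err_eq[OF assms(2)] W_def sqn_add ipr_add ae_def ao_def q_def cS_def ..
  ultimately have "(sqn e S + 2 * ipr e ov S + sqn ov S - (ae + ao)^2 / q) / cS \<le> rU / cU"
    using assms(6) unfolding Y err_affine[OF assms(2)] err_affine[OF assms(3)] by simp
  then have "sqn e S + 2 * ipr e ov S + sqn ov S - (ae + ao)^2 / q \<le> cS / cU * rU"
    using \<open>cS > 0\<close> by (simp add: pos_divide_le_eq mult.commute times_divide_eq_left)
  moreover have "eta2_bracket X e ov S U
      = cS / cU * rU - sqn e S - 2 * ipr e ov S + ae^2 / q + 2 * (\<bar>ae\<bar> * \<bar>ao\<bar>) / q"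
    unfolding eta2_bracket_def rU_def cS_def cU_def ae_def ao_def q_def
    using assms(3) \<open>cU > 0\<close> cU_def by (simp add: field_simps)
  moreover have "- (ao^2 / q) \<le> ae^2 / q + 2 * (\<bar>ae\<bar> * \<bar>ao\<bar>) / q - (ae + ao)^2 / q"
  proof -
    have "ae * ao \<le> \<bar>ae\<bar> * \<bar>ao\<bar>"
      by (metis abs_ge_self abs_mult)
    then show ?thesis
      using q by (simp add: divide_simps power2_eq_square algebra_simps)
  qed
  ultimately show ?thesis unfolding ao_def q_def by linarith
qed

lemma abs_ols_error_le:
  fixes X e ov :: "nat \<Rightarrow> real" and b :: real
  defines "Y \<equiv> \<lambda>i. X i * b + e i + ov i"
  assumes "sqn X S \<noteq> 0" and "sqn X (S - G) \<noteq> 0" and "sqn X U \<noteq> 0" and "card U \<noteq> 0"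
    and "\<forall>i\<in>U. ov i = 0" and "\<forall>i\<in>S - G. ov i = 0"
    and "err X Y S \<le> err X Y U"
  shows "\<bar>ols X Y S - b\<bar>
    \<le> \<bar>ipr X e S\<bar> / sqn X S + sqrt ((1 / sqn X (S - G)) * eta2_bracket X e ov S U)"
proof -
  define q where "q = sqn X S"
  define qN where "qN = sqn X (S - G)"
  define ao where "ao = ipr X ov S"
  have q: "q > 0" using assms(2) sqn_nonneg[of X S] q_def by simp
  have qN: "qN > 0" using assms(3) sqn_nonneg[of X "S - G"] qN_def by simp
  have "ao^2 * (q + qN) \<le> sqn ov S * q^2"
    using outlier_ipr_sq_bound[OF finite_nonempty_if_sqn_nonzero(1)[OF assms(2)] assms(7)]
    unfolding ao_def q_def qN_def .
  then have "ao^2 * qN / q^2 \<le> sqn ov S - ao^2 / q"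
    using q by (simp add: field_simps power2_eq_square)
  also have "\<dots> \<le> eta2_bracket X e ov S U"
    using err_le_imp_eta2_bracket_ge[OF assms(2,4,5,6)] assms(8)
    unfolding Y_def ao_def q_def .
  finally have "(\<bar>ao\<bar> / q)^2 \<le> (1 / qN) * eta2_bracket X e ov S U"
    using qN by (simp add: field_simps power2_eq_square)
  then have ao: "\<bar>ao\<bar> / q \<le> sqrt ((1 / qN) * eta2_bracket X e ov S U)"
    by (simp add: real_le_rsqrt)
  have "ols X Y S - b = ipr X e S / q + ao / q"
    unfolding Y_def add.assoc ols_affine[OF assms(2)]
    unfolding ols_def ipr_add ao_def q_def by (simp add: divide_inverse algebra_simps)
  then have "\<bar>ols X Y S - b\<bar> \<le> \<bar>ipr X e S\<bar> / q + \<bar>ao\<bar> / q"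
    using q abs_triangle_ineq[of "ipr X e S / q" "ao / q"] by (simp add: abs_divide)
  with ao show ?thesis unfolding q_def qN_def by linarith
qed

lemma abs_ols_error_le_eta:
  fixes X e ov :: "nat \<Rightarrow> real" and b :: real
  defines "Y \<equiv> \<lambda>i. X i * b + e i + ov i"
  assumes "\<forall>i\<in>U. ov i = 0" and "\<forall>i\<in>S - G. ov i = 0"
    and "err X Y S \<le> err X Y U"
  shows "ereal \<bar>ols X Y S - b\<bar> \<le> eta1 X e S + eta2 X e ov G S U"
proof (cases "sqn X (S - G) = 0 \<or> sqn X S = 0 \<or> sqn X U = 0 \<or> card U = 0")
  case False
  then show ?thesis
    using abs_ols_error_le[of X S G U ov b e] assms
    by (simp add: eta1_def eta2_def eta2_bracket_def)
qed (auto simp: eta1_def eta2_def)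

lemma bfs_eq_ols_of_minimiser:
  assumes "us \<noteq> []"
  obtains S where "S \<in> set us" and "\<forall>T\<in>set us. err X Y S \<le> err X Y T"
    and "bfs X Y us = ols X Y S"
proof -
  let ?P = "\<lambda>S. \<forall>T\<in>set us. err X Y S \<le> err X Y T"
  have "Min (err X Y ` set us) \<in> err X Y ` set us"
    using assms by (intro Min_in) auto
  then obtain S0 where "S0 \<in> set us" "err X Y S0 = Min (err X Y ` set us)"
    by auto
  then have "?P S0"
    by (simp add: Min_le)
  then have "filter ?P us \<noteq> []"
    using \<open>S0 \<in> set us\<close> by (auto simp: filter_empty_conv)
  then have "hd (filter ?P us) \<in> set (filter ?P us)"
    by (rule hd_in_set)
  then show ?thesis
    using that unfolding bfs_def by auto
qed

theorem theoremD2: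
  fixes n :: nat and \<beta> :: real and \<epsilon> X ov :: "nat \<Rightarrow> real"
    and G :: "nat set" and \<U> :: "nat set set" and us :: "nat set list"
  assumes "G \<subseteq> {1..n}"
    and "\<forall>i\<in>{1..n} - G. ov i = 0"
    and "\<U> \<subseteq> Pow {1..n}"
    and "{} \<notin> \<U>"
    and "Inl \<U> G \<noteq> {}"
    and "distinct us" and "set us = \<U>"
  shows "ereal \<bar>bfs X (\<lambda>i. X i * \<beta> + \<epsilon> i + ov i) us - \<beta>\<bar>
    \<le> Max ((\<lambda>S. Min ((\<lambda>U. eta1 X \<epsilon> S + eta2 X \<epsilon> ov G S U) ` Inl \<U> G)) ` \<U>)"
proof -
  \<comment> \<open>Empty or degenerate sets make eta infinite.\<close>
  define Y where "Y = (\<lambda>i. X i * \<beta> + \<epsilon> i + ov i)"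
  have Inl_sub: "Inl \<U> G \<subseteq> \<U>" unfolding Inl_def by auto
  then have "us \<noteq> []" using assms(5,7) by auto
  then obtain S where S: "S \<in> \<U>" "\<forall>T\<in>\<U>. err X Y S \<le> err X Y T" "bfs X Y us = ols X Y S"
    using bfs_eq_ols_of_minimiser assms(7) by metis
  have "ereal \<bar>ols X Y S - \<beta>\<bar> \<le> eta1 X \<epsilon> S + eta2 X \<epsilon> ov G S U" if "U \<in> Inl \<U> G" for U
  proof -
    have "U \<in> \<U>" "U \<inter> G = {}" using that unfolding Inl_def by auto
    moreover have "U \<subseteq> {1..n}" "S \<subseteq> {1..n}" using \<open>U \<in> \<U>\<close> S(1) assms(3) by auto
    ultimately show ?thesis
      using S(2) assms(2) unfolding Y_def by (intro abs_ols_error_le_eta) auto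
  qed
  then have "ereal \<bar>ols X Y S - \<beta>\<bar> \<le> Min ((\<lambda>U. eta1 X \<epsilon> S + eta2 X \<epsilon> ov G S U) ` Inl \<U> G)"
    using Inl_sub assms(5,7) by (intro Min.boundedI) (auto intro: finite_subset)
  also have "\<dots> \<le> Max ((\<lambda>S. Min ((\<lambda>U. eta1 X \<epsilon> S + eta2 X \<epsilon> ov G S U) ` Inl \<U> G)) ` \<U>)"
    using S(1) assms(7) by (intro Max_ge) auto
  finally show ?thesis using S(3) unfolding Y_def by simp
qed

end
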